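(* Let $x,y,z:(-\infty,0]\to[0,\infty)$ be absolutely continuous functions with $x+y+z>0$ everywhere, $\liminf_{s\to-\infty}y(s)=0$, and, for some $\varepsilon>0$, $$|x'|\le\varepsilon(x+y+z),\qquad y'+y\le\varepsilon(x+z),\qquad z'-z\ge-\varepsilon(x+y).$$ There exist $\varepsilon_0>0$ and $c>0$ such that if $\varepsilon\le\varepsilon_0$, then $y\le2\varepsilon(x+z)$ on $(-\infty,0]$, and moreover one of the following holds: either there exists $s_*\in(-\infty,0]$ with $z\le8\varepsilon x$ on $(-\infty,s_*]$, or $x\le c\varepsilon z$ on $(-\infty,0]$. *)

theory Defs
  imports "HOL-Analysis.Analysis"
begin

definition abs_cont_on :: "real set \<Rightarrow> (real \<Rightarrow> real) \<Rightarrow> bool" where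
  "abs_cont_on S f \<longleftrightarrow>
     (\<forall>e>0. \<exists>d>0. \<forall>(n::nat) (a::nat \<Rightarrow> real) (b::nat \<Rightarrow> real).
        (\<forall>i<n. a i \<le> b i \<and> {a i..b i} \<subseteq> S) \<and>
        (\<forall>i<n. \<forall>j<n. i \<noteq> j \<longrightarrow> b i \<le> a j \<or> b j \<le> a i) \<and>
        (\<Sum>i<n. b i - a i) < d
        \<longrightarrow> (\<Sum>i<n. \<bar>f (b i) - f (a i)\<bar>) < e)"

text \<open>Absolute continuity on the unbounded interval (-\<infinity>,0]: absolute
  continuity on every compact subinterval (local absolute continuity).\<close>
definition abs_cont_nonpos :: "(real \<Rightarrow> real) \<Rightarrow> bool" where
  "abs_cont_nonpos f \<longleftrightarrow> (\<forall>a b. a \<le> b \<and> b \<le> 0 \<longrightarrow> abs_cont_on {a..b} f)"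

end

theory Submission
  imports Defs
begin

text \<open>
  Absolutely continuous functions have Lusin's property (N), so a function that is strictly decreasing
  (almost everywhere) whenever it lies above a level c can never cross c upwards; this comparison
  principle replaces every integration of a differential inequality.

  First, y - 2\<epsilon>(x + z) is decreasing wherever it is positive, so a positive value would persist
  backwards in time and contradict liminf y = 0. Second, z - 8\<epsilon>x is increasing wherever it is
  positive; if it is positive at arbitrarily negative times, it is positive on all of (-\<infinity>, 0]. In
  that case z grows at rate at least 3/4, whereas x - 8\<epsilon>z, once positive, shrinks at rate at
  most 3\<epsilon>; going back in time the first decays much faster than the second, which is incompatible
  with 8\<epsilon>x < z, so x \<le> 8\<epsilon>z everywhere.
\<close>

lemma abs_cont_on_finite_family:
  assumes "abs_cont_on S f" "0 < e"
  obtains d where "0 < d"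
    "\<And>I a b. finite I \<Longrightarrow> \<forall>i\<in>I. a i \<le> b i \<and> {a i..b i} \<subseteq> S \<Longrightarrow>
      \<forall>i\<in>I. \<forall>j\<in>I. i \<noteq> j \<longrightarrow> b i \<le> a j \<or> b j \<le> a i \<Longrightarrow> (\<Sum>i\<in>I. b i - a i) < d \<Longrightarrow>
      (\<Sum>i\<in>I. \<bar>f (b i) - f (a i)\<bar>) < e"
proof -
  obtain d where "0 < d" and d: "\<And>(n::nat) (a::nat \<Rightarrow> real) b. (\<forall>i<n. a i \<le> b i \<and> {a i..b i} \<subseteq> S) \<and>
      (\<forall>i<n. \<forall>j<n. i \<noteq> j \<longrightarrow> b i \<le> a j \<or> b j \<le> a i) \<and> (\<Sum>i<n. b i - a i) < d \<Longrightarrow>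
      (\<Sum>i<n. \<bar>f (b i) - f (a i)\<bar>) < e"
    using assms(1)[unfolded abs_cont_on_def, THEN spec, THEN mp, OF assms(2)] by blast
  show thesis
  proof (rule that[OF \<open>0 < d\<close>])
    fix I and a b :: "_ \<Rightarrow> real"
    assume "finite I" and ab: "\<forall>i\<in>I. a i \<le> b i \<and> {a i..b i} \<subseteq> S"
      and sep: "\<forall>i\<in>I. \<forall>j\<in>I. i \<noteq> j \<longrightarrow> b i \<le> a j \<or> b j \<le> a i"
      and len: "(\<Sum>i\<in>I. b i - a i) < d"
    obtain h where h: "bij_betw h {..<card I} I"
      using ex_bij_betw_nat_finite[OF \<open>finite I\<close>] atLeast0LessThan by metis
    have hI: "h k \<in> I" if "k < card I" for k
      using h that bij_betwE by blast
    have h_inj: "h k \<noteq> h l" if "k < card I" "l < card I" "k \<noteq> l" for k l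
      using h that unfolding bij_betw_def inj_on_def by blast
    have sum_h: "(\<Sum>k<card I. g (h k)) = (\<Sum>i\<in>I. g i)" for g :: "_ \<Rightarrow> real"
      using sum.reindex_bij_betw[OF h] .
    have "(\<Sum>k<card I. \<bar>f (b (h k)) - f (a (h k))\<bar>) < e"
    proof (rule d, intro conjI)
      show "\<forall>k<card I. a (h k) \<le> b (h k) \<and> {a (h k)..b (h k)} \<subseteq> S"
        using ab hI by blast
      show "\<forall>k<card I. \<forall>l<card I. k \<noteq> l \<longrightarrow> b (h k) \<le> a (h l) \<or> b (h l) \<le> a (h k)"
        using sep hI h_inj by blast
      show "(\<Sum>k<card I. b (h k) - a (h k)) < d"
        using len sum_h[of "\<lambda>i. b i - a i"] by simp
    qed
    then show "(\<Sum>i\<in>I. \<bar>f (b i) - f (a i)\<bar>) < e"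
      using sum_h[of "\<lambda>i. \<bar>f (b i) - f (a i)\<bar>"] by simp
  qed
qed

lemma abs_cont_on_imp_continuous_on:
  assumes "abs_cont_on {a..b} f"
  shows "continuous_on {a..b} f"
  unfolding continuous_on_iff
proof (intro ballI allI impI)
  fix t e assume t: "t \<in> {a..b}" and "(0::real) < e"
  obtain d where "0 < d" and d: "\<And>(I :: unit set) l r. finite I \<Longrightarrow> \<forall>i\<in>I. l i \<le> r i \<and> {l i..r i} \<subseteq> {a..b} \<Longrightarrow>
      \<forall>i\<in>I. \<forall>j\<in>I. i \<noteq> j \<longrightarrow> r i \<le> l j \<or> r j \<le> l i \<Longrightarrow> (\<Sum>i\<in>I. r i - l i) < d \<Longrightarrow>
      (\<Sum>i\<in>I. \<bar>f (r i) - f (l i)\<bar>) < e"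
    by (rule abs_cont_on_finite_family[OF assms \<open>0 < e\<close>]) blast
  have "dist (f s) (f t) < e" if s: "s \<in> {a..b}" and "dist s t < d" for s
  proof -
    have "(\<Sum>i\<in>{()}. \<bar>f (max s t) - f (min s t)\<bar>) < e"
      by (rule d[of "{()}" "\<lambda>_. min s t" "\<lambda>_. max s t"])
        (use s t \<open>dist s t < d\<close> in \<open>auto simp: dist_real_def\<close>)
    then show ?thesis
      by (cases "s \<le> t") (simp_all add: dist_real_def abs_minus_commute max_def min_def)
  qed
  then show "\<exists>d>0. \<forall>s\<in>{a..b}. dist s t < d \<longrightarrow> dist (f s) (f t) < e"
    using \<open>0 < d\<close> by blast
qed

lemma abs_cont_on_dominated:
  assumes f: "abs_cont_on S f" and g: "abs_cont_on S g" and "0 \<le> A" "0 \<le> B"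
    and le: "\<And>s t. s \<in> S \<Longrightarrow> t \<in> S \<Longrightarrow> \<bar>F t - F s\<bar> \<le> A * \<bar>f t - f s\<bar> + B * \<bar>g t - g s\<bar>"
  shows "abs_cont_on S F"
  unfolding abs_cont_on_def
proof (intro allI impI)
  fix e :: real assume "0 < e"
  define e' where "e' = e / (2 * (A + B + 1))"
  have "0 < e'" using \<open>0 < e\<close> \<open>0 \<le> A\<close> \<open>0 \<le> B\<close> by (simp add: e'_def)
  obtain d1 where "0 < d1" and d1: "\<And>(n::nat) (a::nat \<Rightarrow> real) b. (\<forall>i<n. a i \<le> b i \<and> {a i..b i} \<subseteq> S) \<and>
      (\<forall>i<n. \<forall>j<n. i \<noteq> j \<longrightarrow> b i \<le> a j \<or> b j \<le> a i) \<and> (\<Sum>i<n. b i - a i) < d1 \<Longrightarrow>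
      (\<Sum>i<n. \<bar>f (b i) - f (a i)\<bar>) < e'"
    using f[unfolded abs_cont_on_def, THEN spec, THEN mp, OF \<open>0 < e'\<close>] by blast
  obtain d2 where "0 < d2" and d2: "\<And>(n::nat) (a::nat \<Rightarrow> real) b. (\<forall>i<n. a i \<le> b i \<and> {a i..b i} \<subseteq> S) \<and>
      (\<forall>i<n. \<forall>j<n. i \<noteq> j \<longrightarrow> b i \<le> a j \<or> b j \<le> a i) \<and> (\<Sum>i<n. b i - a i) < d2 \<Longrightarrow>
      (\<Sum>i<n. \<bar>g (b i) - g (a i)\<bar>) < e'"
    using g[unfolded abs_cont_on_def, THEN spec, THEN mp, OF \<open>0 < e'\<close>] by blast
  show "\<exists>d>0. \<forall>(n::nat) a b. (\<forall>i<n. a i \<le> b i \<and> {a i..b i} \<subseteq> S) \<and>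
      (\<forall>i<n. \<forall>j<n. i \<noteq> j \<longrightarrow> b i \<le> a j \<or> b j \<le> a i) \<and> (\<Sum>i<n. b i - a i) < d \<longrightarrow>
      (\<Sum>i<n. \<bar>F (b i) - F (a i)\<bar>) < e"
  proof (intro exI[of _ "min d1 d2"] conjI allI impI)
    fix n :: nat and a b :: "nat \<Rightarrow> real" assume family: "(\<forall>i<n. a i \<le> b i \<and> {a i..b i} \<subseteq> S) \<and>
      (\<forall>i<n. \<forall>j<n. i \<noteq> j \<longrightarrow> b i \<le> a j \<or> b j \<le> a i) \<and> (\<Sum>i<n. b i - a i) < min d1 d2"
    have "a i \<in> S" "b i \<in> S" if "i < n" for i
    proof -
      have "a i \<le> b i" "{a i..b i} \<subseteq> S"
        using family that by blast+
      then show "a i \<in> S" "b i \<in> S"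
        by auto
    qed
    then have "(\<Sum>i<n. \<bar>F (b i) - F (a i)\<bar>)
        \<le> A * (\<Sum>i<n. \<bar>f (b i) - f (a i)\<bar>) + B * (\<Sum>i<n. \<bar>g (b i) - g (a i)\<bar>)"
      by (auto simp: sum_distrib_left simp flip: sum.distrib intro!: sum_mono le)
    also have "\<dots> \<le> A * e' + B * e'"
      using d1[of n a b] d2[of n a b] family \<open>0 \<le> A\<close> \<open>0 \<le> B\<close>
      by (intro add_mono mult_left_mono) auto
    also have "\<dots> \<le> (A + B + 1) * e'"
      using \<open>0 < e'\<close> by (simp add: algebra_simps)
    also have "\<dots> = e / 2"
      using \<open>0 \<le> A\<close> \<open>0 \<le> B\<close> by (simp add: e'_def field_simps add_nonneg_pos)
    also have "\<dots> < e"
      using \<open>0 < e\<close> by simp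
    finally show "(\<Sum>i<n. \<bar>F (b i) - F (a i)\<bar>) < e" .
  qed (use \<open>0 < d1\<close> \<open>0 < d2\<close> in auto)
qed

lemma abs_cont_on_id: "abs_cont_on S (\<lambda>t. t)"
  unfolding abs_cont_on_def
proof (intro allI impI exI conjI)
  fix e :: real and n :: nat and a b :: "nat \<Rightarrow> real"
  assume "0 < e"
  assume family: "(\<forall>i<n. a i \<le> b i \<and> {a i..b i} \<subseteq> S) \<and>
      (\<forall>i<n. \<forall>j<n. i \<noteq> j \<longrightarrow> b i \<le> a j \<or> b j \<le> a i) \<and> (\<Sum>i<n. b i - a i) < e"
  then have "(\<Sum>i<n. \<bar>b i - a i\<bar>) = (\<Sum>i<n. b i - a i)"
    by (intro sum.cong) auto
  with family show "(\<Sum>i<n. \<bar>b i - a i\<bar>) < e"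
    by linarith
qed

lemma abs_cont_on_bounded_deriv:
  assumes deriv: "\<And>t. t \<in> {a..b} \<Longrightarrow> (f has_real_derivative f' t) (at t)"
    and bound: "\<And>t. t \<in> {a..b} \<Longrightarrow> \<bar>f' t\<bar> \<le> B"
  shows "abs_cont_on {a..b} f"
proof (rule abs_cont_on_dominated[OF abs_cont_on_id abs_cont_on_id, of "max B 0" 0])
  fix s t assume "s \<in> {a..b}" "t \<in> {a..b}"
  then have "norm (f t - f s) \<le> B * norm (t - s)"
    by (intro field_differentiable_bound[of "{a..b}" f f'])
      (auto intro!: has_field_derivative_at_within deriv bound)
  also have "\<dots> \<le> max B 0 * \<bar>t - s\<bar>"
    by (simp add: mult_right_mono)
  finally show "\<bar>f t - f s\<bar> \<le> max B 0 * \<bar>t - s\<bar> + 0 * \<bar>t - s\<bar>"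
    by simp
qed auto

lemma abs_cont_on_exp: "abs_cont_on {a..b} (\<lambda>t. exp (k * t))"
proof (rule abs_cont_on_bounded_deriv)
  fix t :: real assume "t \<in> {a..b}"
  then have "\<bar>t\<bar> \<le> \<bar>a\<bar> + \<bar>b\<bar>"
    by auto
  then have "k * t \<le> \<bar>k\<bar> * (\<bar>a\<bar> + \<bar>b\<bar>)"
    by (metis abs_ge_self abs_ge_zero abs_mult mult_left_mono order_trans)
  then show "\<bar>k * exp (k * t)\<bar> \<le> \<bar>k\<bar> * exp (\<bar>k\<bar> * (\<bar>a\<bar> + \<bar>b\<bar>))"
    by (simp add: abs_mult mult_left_mono)
qed (auto intro!: derivative_eq_intros)

lemma abs_cont_on_cmult: "abs_cont_on S f \<Longrightarrow> abs_cont_on S (\<lambda>t. k * f t)"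
  by (rule abs_cont_on_dominated[of S f f "\<bar>k\<bar>" 0])
    (auto simp flip: abs_mult simp: right_diff_distrib)

lemma abs_cont_on_minus: "abs_cont_on S f \<Longrightarrow> abs_cont_on S (\<lambda>t. - f t)"
  using abs_cont_on_cmult[of S f "-1"] by simp

lemma abs_cont_on_diff:
  "abs_cont_on S f \<Longrightarrow> abs_cont_on S g \<Longrightarrow> abs_cont_on S (\<lambda>t. f t - g t)"
  by (rule abs_cont_on_dominated[of S f g 1 1]) auto

lemma abs_cont_on_mult:
  assumes f: "abs_cont_on {a..b} f" and g: "abs_cont_on {a..b} g"
  shows "abs_cont_on {a..b} (\<lambda>t. f t * g t)"
proof -
  have "compact (f ` {a..b})" "compact (g ` {a..b})"
    using f g by (auto intro: compact_continuous_image abs_cont_on_imp_continuous_on)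
  then obtain Mf Mg where Mf: "0 < Mf" "\<And>t. t \<in> {a..b} \<Longrightarrow> \<bar>f t\<bar> \<le> Mf"
    and Mg: "0 < Mg" "\<And>t. t \<in> {a..b} \<Longrightarrow> \<bar>g t\<bar> \<le> Mg"
    by (metis compact_imp_bounded bounded_pos image_eqI real_norm_def)
  then show ?thesis
  proof (intro abs_cont_on_dominated[OF f g, of Mg Mf])
    fix s t assume "s \<in> {a..b}" "t \<in> {a..b}"
    have "\<bar>f t * g t - f s * g s\<bar> = \<bar>g t * (f t - f s) + f s * (g t - g s)\<bar>"
      by (simp add: algebra_simps)
    also have "\<dots> \<le> \<bar>g t\<bar> * \<bar>f t - f s\<bar> + \<bar>f s\<bar> * \<bar>g t - g s\<bar>"
      by (metis abs_mult abs_triangle_ineq)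
    also have "\<dots> \<le> Mg * \<bar>f t - f s\<bar> + Mf * \<bar>g t - g s\<bar>"
      using \<open>s \<in> {a..b}\<close> \<open>t \<in> {a..b}\<close> Mf Mg by (intro add_mono mult_right_mono) auto
    finally show "\<bar>f t * g t - f s * g s\<bar> \<le> Mg * \<bar>f t - f s\<bar> + Mf * \<bar>g t - g s\<bar>" .
  qed auto
qed

section \<open>Lusin's property (N)\<close>

lemma components_open_subset_interval:
  fixes U C :: "real set"
  assumes C: "C \<in> components U" and "open U" "U \<subseteq> {a<..<b}"
  shows "C = {Inf C<..<Sup C}" "Inf C < Sup C" "{Inf C..Sup C} \<subseteq> {a..b}"
proof -
  have "open C" "connected C" "C \<noteq> {}" "C \<subseteq> {a<..<b}"
    using C \<open>open U\<close> \<open>U \<subseteq> {a<..<b}\<close> open_components in_components_connected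
      in_components_nonempty in_components_subset by blast+
  then have "bdd_below C" "bdd_above C"
    by (auto intro!: bdd_belowI[of _ a] bdd_aboveI[of _ b])
  have inner: "Inf C < t \<and> t < Sup C" if "t \<in> C" for t
  proof -
    obtain r where "0 < r" "ball t r \<subseteq> C"
      using \<open>open C\<close> \<open>t \<in> C\<close> open_contains_ball by blast
    then have "t - r/2 \<in> C" "t + r/2 \<in> C"
      by (auto simp: dist_real_def)
    then have "Inf C \<le> t - r/2" "t + r/2 \<le> Sup C"
      using cInf_lower[OF _ \<open>bdd_below C\<close>] cSup_upper[OF _ \<open>bdd_above C\<close>] by blast+
    then show ?thesis
      using \<open>0 < r\<close> by linarith
  qed
  have "t \<in> C" if "Inf C < t" "t < Sup C" for t
  proof -
    obtain p where "p \<in> C" "p < t"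
      using \<open>Inf C < t\<close> cInf_less_iff[OF \<open>C \<noteq> {}\<close> \<open>bdd_below C\<close>] by blast
    moreover obtain q where "q \<in> C" "t < q"
      using \<open>t < Sup C\<close> less_cSup_iff[OF \<open>C \<noteq> {}\<close> \<open>bdd_above C\<close>] by blast
    ultimately show ?thesis
      using \<open>connected C\<close> unfolding connected_iff_interval by (meson less_imp_le)
  qed
  with inner show "C = {Inf C<..<Sup C}"
    by auto
  obtain t where "t \<in> C"
    using \<open>C \<noteq> {}\<close> by blast
  with inner show "Inf C < Sup C"
    by force
  have "a \<le> Inf C" "Sup C \<le> b"
    using \<open>C \<subseteq> {a<..<b}\<close> \<open>C \<noteq> {}\<close> by (auto intro!: cInf_greatest cSup_least)
  then show "{Inf C..Sup C} \<subseteq> {a..b}"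
    by auto
qed

lemma components_open_subset_separated:
  fixes U :: "real set"
  assumes "C \<in> components U" "C' \<in> components U" "C \<noteq> C'" "open U" "U \<subseteq> {a<..<b}"
  shows "Sup C \<le> Inf C' \<or> Sup C' \<le> Inf C"
proof (rule ccontr)
  let ?m = "(max (Inf C) (Inf C') + min (Sup C) (Sup C')) / 2"
  assume "\<not> ?thesis"
  then have "?m \<in> {Inf C<..<Sup C}" "?m \<in> {Inf C'<..<Sup C'}"
    using components_open_subset_interval(2)[OF assms(1,4,5)]
      components_open_subset_interval(2)[OF assms(2,4,5)] by auto
  then have "?m \<in> C" "?m \<in> C'"
    using components_open_subset_interval(1)[OF assms(1,4,5), symmetric]
      components_open_subset_interval(1)[OF assms(2,4,5), symmetric] by simp_all
  moreover have "C \<inter> C' = {}"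
    using assms(1-3) components_nonoverlap by blast
  ultimately show False
    by blast
qed

lemma sum_components_length_le:
  fixes U :: "real set"
  assumes "finite \<E>" "\<E> \<subseteq> components U" "open U" "U \<subseteq> {a<..<b}"
  shows "(\<Sum>C\<in>\<E>. Sup C - Inf C) \<le> measure lebesgue U"
proof -
  have interval: "C = {Inf C<..<Sup C}" "Inf C < Sup C" if "C \<in> \<E>" for C
    using components_open_subset_interval(1,2)[OF _ assms(3,4)] that assms(2) by blast+
  have "measure lebesgue C = Sup C - Inf C" if "C \<in> \<E>" for C
  proof -
    have "measure lebesgue {Inf C<..<Sup C} = Sup C - Inf C"
      using interval(2)[OF that] by simp
    then show ?thesis
      using interval(1)[OF that, symmetric] by simp
  qed
  have lmeas: "C \<in> lmeasurable" if "C \<in> \<E>" for C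
  proof -
    have "{Inf C<..<Sup C} \<in> lmeasurable"
      by (metis box_real(1) lmeasurable_box)
    then show ?thesis
      using interval(1)[OF that, symmetric] by simp
  qed
  have "(\<Sum>C\<in>\<E>. Sup C - Inf C) = (\<Sum>C\<in>\<E>. measure lebesgue C)"
    using \<open>\<And>C. C \<in> \<E> \<Longrightarrow> measure lebesgue C = Sup C - Inf C\<close> by (intro sum.cong) auto
  also have "\<dots> = measure lebesgue (\<Union>\<E>)"
  proof (rule measure_negligible_finite_Union[symmetric, OF \<open>finite \<E>\<close> lmeas])
    have "S \<inter> T = {}" if "S \<in> \<E>" "T \<in> \<E>" "S \<noteq> T" for S T
      using that \<open>\<E> \<subseteq> components U\<close> components_nonoverlap by blast
    then show "pairwise (\<lambda>S T. negligible (S \<inter> T)) \<E>"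
      unfolding pairwise_def by (metis negligible_empty)
  qed
  also have "\<dots> \<le> measure lebesgue U"
  proof (rule measure_mono_fmeasurable)
    show "\<Union>\<E> \<subseteq> U"
      using \<open>\<E> \<subseteq> components U\<close> in_components_subset by blast
    show "\<Union>\<E> \<in> sets lebesgue"
      using \<open>finite \<E>\<close> lmeas by (auto intro: fmeasurableD)
    show "U \<in> lmeasurable"
      using assms(3,4) by (intro lmeasurable_open) (auto intro: bounded_subset[OF bounded_Ioo])
  qed
  finally show ?thesis .
qed

lemma negligible_small_open_superset:
  assumes "negligible N" "0 < d"
  obtains U where "open U" "N \<subseteq> U" "U \<in> lmeasurable" "measure lebesgue U < d"
proof -
  have N: "N \<in> lmeasurable" "measure lebesgue N = 0"
    using assms(1) negligible_imp_measurable negligible_imp_measure0 by blast+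
  obtain U where U: "open U" "N \<subseteq> U" "U - N \<in> lmeasurable" "emeasure lebesgue (U - N) < ennreal d"
    using sets_lebesgue_outer_open[OF fmeasurableD[OF N(1)] \<open>0 < d\<close>] by blast
  have "U = (U - N) \<union> N"
    using \<open>N \<subseteq> U\<close> by blast
  then have "U \<in> lmeasurable" "measure lebesgue U \<le> measure lebesgue (U - N) + measure lebesgue N"
    using fmeasurable.Un[OF U(3) N(1)] measure_Un_le[OF fmeasurableD[OF U(3)] fmeasurableD[OF N(1)]]
    by simp_all
  moreover have "measure lebesgue (U - N) < d"
    using U(3,4) by (simp add: emeasure_eq_measure2 ennreal_less_iff)
  ultimately show ?thesis
    using that U(1,2) N(2) by simp
qed

lemma measure_continuous_image_interval_le:
  fixes f :: "real \<Rightarrow> real"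
  assumes "continuous_on {l..r} f" "l \<le> r"
  obtains p q where "l \<le> p" "p \<le> q" "q \<le> r" "measure lebesgue (f ` {l..r}) \<le> \<bar>f q - f p\<bar>"
proof -
  have ne: "{l..r} \<noteq> {}"
    using \<open>l \<le> r\<close> by simp
  obtain p0 where p0: "p0 \<in> {l..r}" "\<forall>t\<in>{l..r}. f p0 \<le> f t"
    using continuous_attains_inf[OF compact_Icc ne assms(1)] by blast
  obtain q0 where q0: "q0 \<in> {l..r}" "\<forall>t\<in>{l..r}. f t \<le> f q0"
    using continuous_attains_sup[OF compact_Icc ne assms(1)] by blast
  have "measure lebesgue (f ` {l..r}) \<le> measure lebesgue {f p0..f q0}"
    using p0 q0 fmeasurableD[OF lmeasurable_compact[OF compact_continuous_image[OF assms(1) compact_Icc]]]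
    by (intro measure_mono_fmeasurable) auto
  also have "\<dots> = \<bar>f (max p0 q0) - f (min p0 q0)\<bar>"
    using p0 q0 by (cases "p0 \<le> q0") (auto simp: abs_minus_commute)
  finally show ?thesis
    using that[of "min p0 q0" "max p0 q0"] p0(1) q0(1) by auto
qed

lemma components_image_oscillation:
  fixes f :: "real \<Rightarrow> real"
  assumes "continuous_on {a..b} f" "open U" "U \<subseteq> {a<..<b}"
  obtains l r where "\<And>C. C \<in> components U \<Longrightarrow> Inf C \<le> l C \<and> l C \<le> r C \<and> r C \<le> Sup C \<and>
    measure lebesgue (f ` {Inf C..Sup C}) \<le> \<bar>f (r C) - f (l C)\<bar>"
proof -
  have "\<forall>C\<in>components U. \<exists>lr. Inf C \<le> fst lr \<and> fst lr \<le> snd lr \<and> snd lr \<le> Sup C \<and>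
    measure lebesgue (f ` {Inf C..Sup C}) \<le> \<bar>f (snd lr) - f (fst lr)\<bar>"
  proof
    fix C assume C: "C \<in> components U"
    have "continuous_on {Inf C..Sup C} f"
      using assms(1) components_open_subset_interval(3)[OF C assms(2,3)] by (rule continuous_on_subset)
    from measure_continuous_image_interval_le[OF this less_imp_le[OF components_open_subset_interval(2)[OF C assms(2,3)]]]
    show "\<exists>lr. Inf C \<le> fst lr \<and> fst lr \<le> snd lr \<and> snd lr \<le> Sup C \<and>
      measure lebesgue (f ` {Inf C..Sup C}) \<le> \<bar>f (snd lr) - f (fst lr)\<bar>"
      by (metis fst_conv snd_conv)
  qed
  then obtain lr where "\<forall>C\<in>components U. Inf C \<le> fst (lr C) \<and> fst (lr C) \<le> snd (lr C) \<and> snd (lr C) \<le> Sup C \<and>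
    measure lebesgue (f ` {Inf C..Sup C}) \<le> \<bar>f (snd (lr C)) - f (fst (lr C))\<bar>"
    by (rule bchoice[THEN exE])
  then show thesis
    using that[of "\<lambda>C. fst (lr C)" "\<lambda>C. snd (lr C)"] by simp
qed

lemma abs_cont_on_sum_image_components:
  assumes ac: "abs_cont_on {a..b} f" and "0 < e"
  obtains d where "0 < d" "\<And>U \<E>. open U \<Longrightarrow> U \<subseteq> {a<..<b} \<Longrightarrow> measure lebesgue U < d \<Longrightarrow>
    finite \<E> \<Longrightarrow> \<E> \<subseteq> components U \<Longrightarrow> (\<Sum>C\<in>\<E>. measure lebesgue (f ` {Inf C..Sup C})) < e"
proof -
  obtain d where "0 < d" and d: "\<And>(I :: real set set) l r. finite I \<Longrightarrow> \<forall>i\<in>I. l i \<le> r i \<and> {l i..r i} \<subseteq> {a..b} \<Longrightarrow>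
      \<forall>i\<in>I. \<forall>j\<in>I. i \<noteq> j \<longrightarrow> r i \<le> l j \<or> r j \<le> l i \<Longrightarrow> (\<Sum>i\<in>I. r i - l i) < d \<Longrightarrow>
      (\<Sum>i\<in>I. \<bar>f (r i) - f (l i)\<bar>) < e"
    by (rule abs_cont_on_finite_family[OF ac \<open>0 < e\<close>]) blast
  show thesis
  proof (rule that[OF \<open>0 < d\<close>])
    fix U \<E> assume U: "open U" "U \<subseteq> {a<..<b}" "measure lebesgue U < d"
      and \<E>: "finite \<E>" "\<E> \<subseteq> components U"
    obtain l r where lr0: "\<And>C. C \<in> components U \<Longrightarrow> Inf C \<le> l C \<and> l C \<le> r C \<and> r C \<le> Sup C \<and>
      measure lebesgue (f ` {Inf C..Sup C}) \<le> \<bar>f (r C) - f (l C)\<bar>"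
      by (rule components_image_oscillation[OF abs_cont_on_imp_continuous_on[OF ac] U(1,2)]) blast
    have lr: "Inf C \<le> l C" "l C \<le> r C" "r C \<le> Sup C"
      "measure lebesgue (f ` {Inf C..Sup C}) \<le> \<bar>f (r C) - f (l C)\<bar>" if "C \<in> \<E>" for C
      using lr0[of C] that \<E>(2) by auto
    have "(\<Sum>C\<in>\<E>. measure lebesgue (f ` {Inf C..Sup C})) \<le> (\<Sum>C\<in>\<E>. \<bar>f (r C) - f (l C)\<bar>)"
      using lr(4) by (rule sum_mono)
    also have "\<dots> < e"
    proof (rule d[OF \<open>finite \<E>\<close>])
      show "\<forall>C\<in>\<E>. l C \<le> r C \<and> {l C..r C} \<subseteq> {a..b}"
        using lr(1-3) components_open_subset_interval(3)[OF _ U(1,2)] \<E>(2) by (meson atLeastatMost_subset_iff order.trans subsetD)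
      show "\<forall>C\<in>\<E>. \<forall>C'\<in>\<E>. C \<noteq> C' \<longrightarrow> r C \<le> l C' \<or> r C' \<le> l C"
      proof (intro ballI impI)
        fix C C' assume "C \<in> \<E>" "C' \<in> \<E>" "C \<noteq> C'"
        then have "Sup C \<le> Inf C' \<or> Sup C' \<le> Inf C"
          using components_open_subset_separated[OF _ _ _ U(1,2)] \<E>(2) by blast
        then show "r C \<le> l C' \<or> r C' \<le> l C"
          using lr[OF \<open>C \<in> \<E>\<close>] lr[OF \<open>C' \<in> \<E>\<close>] by linarith
      qed
      have "(\<Sum>C\<in>\<E>. r C - l C) \<le> (\<Sum>C\<in>\<E>. Sup C - Inf C)"
        using lr by (intro sum_mono) (meson diff_mono)
      also have "\<dots> \<le> measure lebesgue U"
        using sum_components_length_le[OF \<E> U(1,2)] .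
      finally show "(\<Sum>C\<in>\<E>. r C - l C) < d"
        using \<open>measure lebesgue U < d\<close> by linarith
    qed
    finally show "(\<Sum>C\<in>\<E>. measure lebesgue (f ` {Inf C..Sup C})) < e" .
  qed
qed

lemma abs_cont_on_negligible_image:
  assumes ac: "abs_cont_on {a..b} f" and "negligible N" "N \<subseteq> {a<..<b}"
  shows "negligible (f ` N)"
  unfolding negligible_outer_le
proof (intro allI impI)
  fix e :: real assume "0 < e"
  obtain d where "0 < d" and d: "\<And>U \<E>. open U \<Longrightarrow> U \<subseteq> {a<..<b} \<Longrightarrow> measure lebesgue U < d \<Longrightarrow>
    finite \<E> \<Longrightarrow> \<E> \<subseteq> components U \<Longrightarrow> (\<Sum>C\<in>\<E>. measure lebesgue (f ` {Inf C..Sup C})) < e"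
    by (rule abs_cont_on_sum_image_components[OF ac \<open>0 < e\<close>]) blast
  obtain U0 where "open U0" "N \<subseteq> U0" "U0 \<in> lmeasurable" "measure lebesgue U0 < d"
    using negligible_small_open_superset[OF \<open>negligible N\<close> \<open>0 < d\<close>] .
  define U where "U = U0 \<inter> {a<..<b}"
  have U: "open U" "U \<subseteq> {a<..<b}" "N \<subseteq> U"
    using \<open>open U0\<close> \<open>N \<subseteq> U0\<close> \<open>N \<subseteq> {a<..<b}\<close> by (auto simp: U_def)
  have "measure lebesgue U \<le> measure lebesgue U0"
    using \<open>U0 \<in> lmeasurable\<close> by (intro measure_mono_fmeasurable) (auto simp: U_def)
  with \<open>measure lebesgue U0 < d\<close> have "measure lebesgue U < d"
    by linarith
  define \<D> where "\<D> = (\<lambda>C. f ` {Inf C..Sup C}) ` components U"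
  have "f ` N \<subseteq> \<Union>\<D>"
  proof
    fix v assume "v \<in> f ` N"
    then obtain t where "t \<in> N" "v = f t"
      by blast
    then obtain C where C: "C \<in> components U" "t \<in> C"
      using U(3) Union_components[of U] by blast
    then have "t \<in> {Inf C..Sup C}"
      using components_open_subset_interval(1)[OF C(1) U(1,2)]
      by (metis greaterThanLessThan_iff atLeastAtMost_iff less_imp_le)
    then show "v \<in> \<Union>\<D>"
      using C(1) \<open>v = f t\<close> unfolding \<D>_def by blast
  qed
  moreover have "countable \<D>"
  proof -
    have "countable (components U)"
      using pairwise_disjoint_components[of U]
      by (intro countable_disjoint_open_subsets) (auto simp: open_components[OF U(1)] pairwise_def disjnt_def)
    then show ?thesis
      unfolding \<D>_def by blast
  qed
  moreover have lmeas: "D \<in> lmeasurable" if "D \<in> \<D>" for D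
  proof -
    obtain C where "C \<in> components U" "D = f ` {Inf C..Sup C}"
      using \<open>D \<in> \<D>\<close> unfolding \<D>_def by blast
    moreover have "continuous_on {Inf C..Sup C} f"
      using abs_cont_on_imp_continuous_on[OF ac] components_open_subset_interval(3)[OF \<open>C \<in> components U\<close> U(1,2)]
      by (rule continuous_on_subset)
    ultimately show ?thesis
      using compact_continuous_image lmeasurable_compact by blast
  qed
  moreover have "measure lebesgue (\<Union>\<D>') \<le> e" if "\<D>' \<subseteq> \<D>" "finite \<D>'" for \<D>'
  proof -
    obtain \<E> where \<E>: "\<E> \<subseteq> components U" "finite \<E>" "\<D>' = (\<lambda>C. f ` {Inf C..Sup C}) ` \<E>"
      using finite_subset_image[OF \<open>finite \<D>'\<close> \<open>\<D>' \<subseteq> \<D>\<close>[unfolded \<D>_def]] by blast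
    have "measure lebesgue (\<Union>\<D>') \<le> (\<Sum>C\<in>\<E>. measure lebesgue (f ` {Inf C..Sup C}))"
      unfolding \<E>(3) using \<E> lmeas by (intro measure_UNION_le) (auto simp: \<D>_def intro: fmeasurableD)
    also have "\<dots> < e"
      using d[OF U(1,2) \<open>measure lebesgue U < d\<close> \<E>(2,1)] .
    finally show ?thesis
      by linarith
  qed
  ultimately show "\<exists>T. f ` N \<subseteq> T \<and> T \<in> lmeasurable \<and> measure lebesgue T \<le> e"
    using fmeasurable_Union_bound[of \<D> lebesgue e] measure_Union_bound[of \<D> lebesgue e] by blast
qed

section \<open>A comparison principle\<close>

lemma continuous_on_last_crossing:
  fixes f :: "real \<Rightarrow> real"
  assumes cont: "continuous_on {a..b} f" and "a \<le> b" "f a < v" "v < f b"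
  obtains t where "a < t" "t < b" "f t = v" "\<And>s. t < s \<Longrightarrow> s \<le> b \<Longrightarrow> v < f s"
proof -
  define S where "S = {a..b} \<inter> f -` {..v}"
  have "closed S"
    unfolding S_def by (rule continuous_closed_preimage[OF cont]) auto
  have "a \<in> S" "bdd_above S"
    using \<open>a \<le> b\<close> \<open>f a < v\<close> by (auto simp: S_def intro!: bdd_aboveI[of _ b])
  define t where "t = Sup S"
  have "t \<in> S"
    unfolding t_def using closed_contains_Sup[OF _ \<open>bdd_above S\<close> \<open>closed S\<close>] \<open>a \<in> S\<close> by blast
  then have "a \<le> t" "t \<le> b" "f t \<le> v"
    by (auto simp: S_def)
  have above: "v < f s" if "t < s" "s \<le> b" for s
  proof (rule ccontr)
    assume "\<not> v < f s"
    then have "s \<in> S"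
      using that \<open>a \<le> t\<close> by (auto simp: S_def)
    then have "s \<le> t"
      unfolding t_def using \<open>bdd_above S\<close> by (rule cSup_upper)
    with \<open>t < s\<close> show False
      by simp
  qed
  have "t < b"
    using \<open>t \<le> b\<close> \<open>f t \<le> v\<close> \<open>v < f b\<close> by (cases "t = b") auto
  have "f t = v"
  proof (rule ccontr)
    assume "f t \<noteq> v"
    with \<open>f t \<le> v\<close> have "0 < v - f t"
      by simp
    moreover have "t \<in> {a..b}"
      using \<open>t \<in> S\<close> by (simp add: S_def)
    ultimately obtain \<delta> where "0 < \<delta>"
      and \<delta>: "\<And>s. s \<in> {a..b} \<Longrightarrow> dist s t < \<delta> \<Longrightarrow> dist (f s) (f t) < v - f t"
      using cont unfolding continuous_on_iff by blast
    define s where "s = min b (t + \<delta> / 2)"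
    have "s \<in> {a..b}" "dist s t < \<delta>" "t < s" "s \<le> b"
      using \<open>a \<le> t\<close> \<open>t < b\<close> \<open>0 < \<delta>\<close> by (auto simp: s_def dist_real_def)
    then have "dist (f s) (f t) < v - f t" "v < f s"
      using \<delta> above by auto
    then show False
      by (simp add: dist_real_def)
  qed
  have "a < t"
    using \<open>a \<le> t\<close> \<open>f t = v\<close> \<open>f a < v\<close> by (cases "a = t") auto
  show ?thesis
    using that \<open>a < t\<close> \<open>t < b\<close> \<open>f t = v\<close> above by blast
qed

lemma abs_cont_on_stays_below:
  fixes f :: "real \<Rightarrow> real"
  assumes "a \<le> b" and ac: "abs_cont_on {a..b} f" and "negligible N" and "f a \<le> c" "c < d"
    and deriv: "\<And>t. a < t \<Longrightarrow> t < b \<Longrightarrow> t \<notin> N \<Longrightarrow> c < f t \<Longrightarrow> f t < d \<Longrightarrow>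
      \<exists>D. (f has_real_derivative D) (at t) \<and> D < 0"
  shows "f b \<le> c"
proof (rule ccontr)
  assume "\<not> f b \<le> c"
  have "negligible (f ` (N \<inter> {a<..<b}))"
    using \<open>negligible N\<close> by (intro abs_cont_on_negligible_image[OF ac]) (auto intro: negligible_subset)
  moreover have "\<not> negligible {c<..<min (f b) d}"
    using \<open>\<not> f b \<le> c\<close> \<open>c < d\<close> negligible_interval(2)[of c "min (f b) d"] by (simp add: box_real(1))
  ultimately have "\<not> {c<..<min (f b) d} \<subseteq> f ` (N \<inter> {a<..<b})"
    using negligible_subset by blast
  then obtain v where "v \<in> {c<..<min (f b) d}" "v \<notin> f ` (N \<inter> {a<..<b})"
    by blast
  then have "c < v" "v < f b" "v < d" "v \<notin> f ` (N \<inter> {a<..<b})"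
    by auto
  moreover have "f a < v"
    using \<open>f a \<le> c\<close> \<open>c < v\<close> by linarith
  ultimately obtain t where "a < t" "t < b" "f t = v" and above: "\<And>s. t < s \<Longrightarrow> s \<le> b \<Longrightarrow> v < f s"
    using continuous_on_last_crossing[OF abs_cont_on_imp_continuous_on[OF ac] \<open>a \<le> b\<close>] by metis
  \<comment> \<open>The level v was chosen outside f(N), so f is differentiable at the crossing time t.\<close>
  then have "t \<notin> N"
    using \<open>v \<notin> f ` (N \<inter> {a<..<b})\<close> by auto
  then obtain D where D: "(f has_real_derivative D) (at t)" "D < 0"
    using deriv \<open>a < t\<close> \<open>t < b\<close> \<open>f t = v\<close> \<open>c < v\<close> \<open>v < d\<close> by blast
  obtain h0 where "0 < h0" and dec: "\<And>h. 0 < h \<Longrightarrow> h < h0 \<Longrightarrow> f (t + h) < f t"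
    using DERIV_neg_dec_right[OF D] by blast
  define h where "h = min (h0 / 2) (b - t)"
  have "0 < h" "h < h0" "t < t + h" "t + h \<le> b"
    using \<open>0 < h0\<close> \<open>t < b\<close> by (auto simp: h_def)
  then have "f (t + h) < v" "v < f (t + h)"
    using dec \<open>f t = v\<close> above by auto
  then show False
    by simp
qed

lemma abs_cont_on_stays_above:
  fixes f :: "real \<Rightarrow> real"
  assumes "a \<le> b" and ac: "abs_cont_on {a..b} f" and "negligible N" and "c \<le> f a" "d < c"
    and deriv: "\<And>t. a < t \<Longrightarrow> t < b \<Longrightarrow> t \<notin> N \<Longrightarrow> d < f t \<Longrightarrow> f t < c \<Longrightarrow>
      \<exists>D. (f has_real_derivative D) (at t) \<and> 0 < D"
  shows "c \<le> f b"
proof -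
  have "- f b \<le> - c"
  proof (rule abs_cont_on_stays_below[where f = "\<lambda>t. - f t" and d = "- d",
        OF \<open>a \<le> b\<close> abs_cont_on_minus[OF ac] \<open>negligible N\<close>])
    fix t assume "a < t" "t < b" "t \<notin> N" "- c < - f t" "- f t < - d"
    then obtain D where "(f has_real_derivative D) (at t)" "0 < D"
      using deriv by force
    then show "\<exists>D. ((\<lambda>t. - f t) has_real_derivative D) (at t) \<and> D < 0"
      by (intro exI[of _ "- D"]) (auto intro: DERIV_minus)
  qed (use assms in auto)
  then show ?thesis
    by simp
qed

section \<open>The perturbed centre-stable-unstable system\<close>

lemma DERIV_exp_scaled: "((\<lambda>r. exp (k * r)) has_real_derivative k * exp (k * t)) (at t)"
  by (auto intro!: derivative_eq_intros)

definition csu_bounds :: "real \<Rightarrow> real \<Rightarrow> real \<Rightarrow> real \<Rightarrow> real \<Rightarrow> real \<Rightarrow> real \<Rightarrow> bool" where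
  "csu_bounds \<epsilon> x y z x' y' z' \<longleftrightarrow>
     \<bar>x'\<bar> \<le> \<epsilon> * (x + y + z) \<and> y' + y \<le> \<epsilon> * (x + z) \<and> z' - z \<ge> - \<epsilon> * (x + y)"

lemma small_factor_le:
  fixes \<epsilon> v :: real
  assumes "0 < \<epsilon>" "\<epsilon> \<le> 1/100" "0 \<le> v"
  shows "0 \<le> \<epsilon> * v" "\<epsilon> * v \<le> v / 100" "\<epsilon> * (\<epsilon> * v) \<le> \<epsilon> * v / 100"
  using assms mult_right_mono[of \<epsilon> "1/100" v] mult_right_mono[of \<epsilon> "1/100" "\<epsilon> * v"] by auto

text \<open>Products are kept right-nested, as in \<epsilon> * (\<epsilon> * x), so that linarith can treat them as atoms.\<close>
lemma csu_bounds_linear: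
  fixes \<epsilon> x y z x' y' z' :: real
  assumes "csu_bounds \<epsilon> x y z x' y' z'" "0 < \<epsilon>"
  shows "- (\<epsilon> * x) - \<epsilon> * y - \<epsilon> * z \<le> x'" "x' \<le> \<epsilon> * x + \<epsilon> * y + \<epsilon> * z"
    and "y' \<le> \<epsilon> * x + \<epsilon> * z - y" and "z - \<epsilon> * x - \<epsilon> * y \<le> z'"
    and "- (\<epsilon> * (\<epsilon> * x)) - \<epsilon> * (\<epsilon> * y) - \<epsilon> * (\<epsilon> * z) \<le> \<epsilon> * x'"
    and "\<epsilon> * x' \<le> \<epsilon> * (\<epsilon> * x) + \<epsilon> * (\<epsilon> * y) + \<epsilon> * (\<epsilon> * z)"
    and "\<epsilon> * z - \<epsilon> * (\<epsilon> * x) - \<epsilon> * (\<epsilon> * y) \<le> \<epsilon> * z'"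
proof -
  have x': "- (\<epsilon> * (x + y + z)) \<le> x'" "x' \<le> \<epsilon> * (x + y + z)" and y': "y' + y \<le> \<epsilon> * (x + z)"
    and z': "z - \<epsilon> * (x + y) \<le> z'"
    using assms(1) by (auto simp: csu_bounds_def abs_le_iff)
  then show "- (\<epsilon> * x) - \<epsilon> * y - \<epsilon> * z \<le> x'" "x' \<le> \<epsilon> * x + \<epsilon> * y + \<epsilon> * z"
    and "y' \<le> \<epsilon> * x + \<epsilon> * z - y" and "z - \<epsilon> * x - \<epsilon> * y \<le> z'"
    by (simp_all add: algebra_simps)
  have "\<epsilon> * - (\<epsilon> * (x + y + z)) \<le> \<epsilon> * x'" "\<epsilon> * x' \<le> \<epsilon> * (\<epsilon> * (x + y + z))"
    "\<epsilon> * (z - \<epsilon> * (x + y)) \<le> \<epsilon> * z'"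
    using x' z' assms(2) by (intro mult_left_mono; simp)+
  then show "- (\<epsilon> * (\<epsilon> * x)) - \<epsilon> * (\<epsilon> * y) - \<epsilon> * (\<epsilon> * z) \<le> \<epsilon> * x'"
    and "\<epsilon> * x' \<le> \<epsilon> * (\<epsilon> * x) + \<epsilon> * (\<epsilon> * y) + \<epsilon> * (\<epsilon> * z)"
    and "\<epsilon> * z - \<epsilon> * (\<epsilon> * x) - \<epsilon> * (\<epsilon> * y) \<le> \<epsilon> * z'"
    by (simp_all add: algebra_simps)
qed

lemma csu_bounds_y_excess_slope:
  fixes \<epsilon> x y z x' y' z' :: real
  assumes "csu_bounds \<epsilon> x y z x' y' z'" "0 < \<epsilon>" "\<epsilon> \<le> 1/100" "0 \<le> x" "0 \<le> y" "0 \<le> z"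
    and "y > 2 * \<epsilon> * (x + z)"
  shows "y' - 2 * \<epsilon> * x' - 2 * \<epsilon> * z' < 0"
  using csu_bounds_linear[OF assms(1,2)] assms(7) assms(4-6)
    small_factor_le[OF assms(2,3) assms(4)] small_factor_le[OF assms(2,3) assms(5)]
    small_factor_le[OF assms(2,3) assms(6)]
  unfolding mult.assoc distrib_left by linarith

lemma csu_bounds_z_excess_slope:
  fixes \<epsilon> x y z x' y' z' :: real
  assumes "csu_bounds \<epsilon> x y z x' y' z'" "0 < \<epsilon>" "\<epsilon> \<le> 1/100" "0 \<le> x" "0 \<le> y" "0 \<le> z"
    and "y \<le> 2 * \<epsilon> * (x + z)" "z > 8 * \<epsilon> * x"
  shows "z' - 8 * \<epsilon> * x' > 0" "z' > 3/4 * z"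
proof -
  have "\<epsilon> * y \<le> \<epsilon> * (2 * \<epsilon> * (x + z))"
    using assms(2,7) by (intro mult_left_mono) auto
  then have "\<epsilon> * y \<le> 2 * (\<epsilon> * (\<epsilon> * x)) + 2 * (\<epsilon> * (\<epsilon> * z))"
    by (simp add: algebra_simps)
  note facts = this csu_bounds_linear[OF assms(1,2)] assms(8) assms(4-6)
    small_factor_le[OF assms(2,3) assms(4)] small_factor_le[OF assms(2,3) assms(5)]
    small_factor_le[OF assms(2,3) assms(6)]
  show "z' - 8 * \<epsilon> * x' > 0"
    using facts unfolding mult.assoc by linarith
  show "z' > 3/4 * z"
    using facts unfolding mult.assoc by linarith
qed

lemma csu_bounds_x_excess_slope:
  fixes \<epsilon> x y z x' y' z' :: real
  assumes "csu_bounds \<epsilon> x y z x' y' z'" "0 < \<epsilon>" "\<epsilon> \<le> 1/100" "0 \<le> x" "0 \<le> y" "0 \<le> z"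
    and "y \<le> 2 * \<epsilon> * (x + z)" "x > 8 * \<epsilon> * z"
  shows "x' - 8 * \<epsilon> * z' < 3 * \<epsilon> * (x - 8 * \<epsilon> * z)"
proof -
  have "\<epsilon> * y \<le> \<epsilon> * (2 * \<epsilon> * (x + z))"
    using assms(2,7) by (intro mult_left_mono) auto
  then have "\<epsilon> * y \<le> 2 * (\<epsilon> * (\<epsilon> * x)) + 2 * (\<epsilon> * (\<epsilon> * z))"
    by (simp add: algebra_simps)
  moreover have "0 < \<epsilon> * x"
  proof -
    have "0 \<le> 8 * \<epsilon> * z"
      using assms(2,6) by simp
    then have "0 < x"
      using assms(8) by linarith
    then show ?thesis
      using assms(2) by simp
  qed
  ultimately show ?thesis
    using csu_bounds_linear[OF assms(1,2)] assms(8) assms(4-6)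
      small_factor_le[OF assms(2,3) assms(4)] small_factor_le[OF assms(2,3) assms(5)]
      small_factor_le[OF assms(2,3) assms(6)]
    unfolding mult.assoc right_diff_distrib by linarith
qed

locale csu_system =
  fixes x y z :: "real \<Rightarrow> real" and \<epsilon> :: real and N :: "real set"
  assumes abs_cont: "abs_cont_nonpos x" "abs_cont_nonpos y" "abs_cont_nonpos z"
    and nonneg: "\<And>s. s \<le> 0 \<Longrightarrow> 0 \<le> x s" "\<And>s. s \<le> 0 \<Longrightarrow> 0 \<le> y s" "\<And>s. s \<le> 0 \<Longrightarrow> 0 \<le> z s"
    and liminf_y: "Liminf at_bot (\<lambda>s. ereal (y s)) = 0"
    and eps: "0 < \<epsilon>" "\<epsilon> \<le> 1/100"
    and negligible_N: "negligible N"
    and deriv: "\<And>s. s \<le> 0 \<Longrightarrow> s \<notin> N \<Longrightarrow> \<exists>x' y' z'. (x has_real_derivative x') (at s) \<and>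
      (y has_real_derivative y') (at s) \<and> (z has_real_derivative z') (at s) \<and>
      csu_bounds \<epsilon> (x s) (y s) (z s) x' y' z'"
begin

lemma abs_cont_on_xyz:
  assumes "r \<le> s" "s \<le> 0"
  shows "abs_cont_on {r..s} x" "abs_cont_on {r..s} y" "abs_cont_on {r..s} z"
  using abs_cont assms by (simp_all add: abs_cont_nonpos_def)

lemma stays_below:
  assumes "r \<le> s" "s \<le> 0" "abs_cont_on {r..s} f" "f r \<le> c"
    and slope: "\<And>t x' y' z'. t \<le> 0 \<Longrightarrow> (x has_real_derivative x') (at t) \<Longrightarrow>
      (y has_real_derivative y') (at t) \<Longrightarrow> (z has_real_derivative z') (at t) \<Longrightarrow>
      csu_bounds \<epsilon> (x t) (y t) (z t) x' y' z' \<Longrightarrow> c < f t \<Longrightarrow>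
      \<exists>D. (f has_real_derivative D) (at t) \<and> D < 0"
  shows "f s \<le> c"
proof (rule abs_cont_on_stays_below[OF assms(1,3) negligible_N assms(4), of "c + 1"])
  fix t assume "r < t" "t < s" "t \<notin> N" "c < f t"
  with \<open>s \<le> 0\<close> show "\<exists>D. (f has_real_derivative D) (at t) \<and> D < 0"
    using deriv[of t] slope[of t] by force
qed simp

lemma stays_above:
  assumes "r \<le> s" "s \<le> 0" "abs_cont_on {r..s} f" "c \<le> f r" "d < c"
    and slope: "\<And>t x' y' z'. t \<le> 0 \<Longrightarrow> (x has_real_derivative x') (at t) \<Longrightarrow>
      (y has_real_derivative y') (at t) \<Longrightarrow> (z has_real_derivative z') (at t) \<Longrightarrow>
      csu_bounds \<epsilon> (x t) (y t) (z t) x' y' z' \<Longrightarrow> d < f t \<Longrightarrow>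
      \<exists>D. (f has_real_derivative D) (at t) \<and> 0 < D"
  shows "c \<le> f s"
proof (rule abs_cont_on_stays_above[OF assms(1,3) negligible_N assms(4,5)])
  fix t assume "r < t" "t < s" "t \<notin> N" "d < f t"
  with \<open>s \<le> 0\<close> show "\<exists>D. (f has_real_derivative D) (at t) \<and> 0 < D"
    using deriv[of t] slope[of t] by force
qed

lemma y_excess_antimono:
  assumes "r \<le> s" "s \<le> 0" "2 * \<epsilon> * (x s + z s) < y s"
  shows "y s - 2 * \<epsilon> * (x s + z s) \<le> y r - 2 * \<epsilon> * (x r + z r)"
proof -
  define w where "w t = y t - 2 * \<epsilon> * x t - 2 * \<epsilon> * z t" for t
  have "w s \<le> max (w r) 0"
  proof (rule stays_below[OF \<open>r \<le> s\<close> \<open>s \<le> 0\<close>])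
    show "abs_cont_on {r..s} w"
      unfolding w_def using abs_cont_on_xyz[OF \<open>r \<le> s\<close> \<open>s \<le> 0\<close>]
      by (intro abs_cont_on_diff abs_cont_on_cmult)
    fix t x' y' z' assume "t \<le> 0" and dx: "(x has_real_derivative x') (at t)"
      and dy: "(y has_real_derivative y') (at t)" and dz: "(z has_real_derivative z') (at t)"
      and bounds: "csu_bounds \<epsilon> (x t) (y t) (z t) x' y' z'" and "max (w r) 0 < w t"
    then have "y t > 2 * \<epsilon> * (x t + z t)"
      by (simp add: w_def algebra_simps)
    then have "y' - 2 * \<epsilon> * x' - 2 * \<epsilon> * z' < 0"
      using csu_bounds_y_excess_slope[OF bounds eps] nonneg \<open>t \<le> 0\<close> by blast
    moreover have "(w has_real_derivative y' - 2 * \<epsilon> * x' - 2 * \<epsilon> * z') (at t)"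
      unfolding w_def by (intro DERIV_diff DERIV_cmult dx dy dz)
    ultimately show "\<exists>D. (w has_real_derivative D) (at t) \<and> D < 0"
      by blast
  qed simp
  moreover have "0 < w s"
    using assms(3) by (simp add: w_def algebra_simps)
  ultimately show ?thesis
    by (simp add: w_def algebra_simps)
qed

lemma y_bound:
  assumes "s \<le> 0"
  shows "y s \<le> 2 * \<epsilon> * (x s + z s)"
proof (rule ccontr)
  assume excess: "\<not> y s \<le> 2 * \<epsilon> * (x s + z s)"
  have "ereal (y s - 2 * \<epsilon> * (x s + z s)) \<le> ereal (y r)" if "r \<le> s" for r
  proof -
    have "0 \<le> 2 * \<epsilon> * (x r + z r)"
      using nonneg(1,3)[of r] \<open>r \<le> s\<close> \<open>s \<le> 0\<close> eps(1) by simp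
    then show ?thesis
      using y_excess_antimono[OF \<open>r \<le> s\<close> \<open>s \<le> 0\<close>] excess by simp
  qed
  then have "ereal (y s - 2 * \<epsilon> * (x s + z s)) \<le> Liminf at_bot (\<lambda>r. ereal (y r))"
    by (intro Liminf_bounded) (auto simp: eventually_at_bot_linorder)
  with liminf_y excess show False
    by simp
qed

lemma z_excess_mono:
  assumes "s \<le> t" "t \<le> 0" "8 * \<epsilon> * x s < z s"
  shows "z s - 8 * \<epsilon> * x s \<le> z t - 8 * \<epsilon> * x t"
proof (rule stays_above[OF \<open>s \<le> t\<close> \<open>t \<le> 0\<close>, where f = "\<lambda>r. z r - 8 * \<epsilon> * x r" and d = 0])
  show "abs_cont_on {s..t} (\<lambda>r. z r - 8 * \<epsilon> * x r)"
    using abs_cont_on_xyz[OF \<open>s \<le> t\<close> \<open>t \<le> 0\<close>] by (intro abs_cont_on_diff abs_cont_on_cmult)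
  fix r x' y' z' assume "r \<le> 0" and dx: "(x has_real_derivative x') (at r)"
    and "(y has_real_derivative y') (at r)" and dz: "(z has_real_derivative z') (at r)"
    and bounds: "csu_bounds \<epsilon> (x r) (y r) (z r) x' y' z'" and "0 < z r - 8 * \<epsilon> * x r"
  then have "z' - 8 * \<epsilon> * x' > 0"
    using csu_bounds_z_excess_slope(1)[OF bounds eps] nonneg y_bound by simp
  moreover have "((\<lambda>r. z r - 8 * \<epsilon> * x r) has_real_derivative z' - 8 * \<epsilon> * x') (at r)"
    by (intro DERIV_diff DERIV_cmult dx dz)
  ultimately show "\<exists>D. ((\<lambda>r. z r - 8 * \<epsilon> * x r) has_real_derivative D) (at r) \<and> 0 < D"
    by blast
qed (use assms in auto)

lemma z_growth:
  assumes "s \<le> t" "t \<le> 0" and z_large: "\<And>r. r \<le> 0 \<Longrightarrow> 8 * \<epsilon> * x r < z r"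
  shows "z s * exp (- (3/4) * s) \<le> z t * exp (- (3/4) * t)"
proof (rule stays_above[OF \<open>s \<le> t\<close> \<open>t \<le> 0\<close>, where f = "\<lambda>r. z r * exp (- (3/4) * r)"
      and d = "z s * exp (- (3/4) * s) - 1"])
  show "abs_cont_on {s..t} (\<lambda>r. z r * exp (- (3/4) * r))"
    using abs_cont_on_xyz[OF \<open>s \<le> t\<close> \<open>t \<le> 0\<close>] by (intro abs_cont_on_mult abs_cont_on_exp)
  fix r x' y' z' assume "r \<le> 0" and "(z has_real_derivative z') (at r)"
    and bounds: "csu_bounds \<epsilon> (x r) (y r) (z r) x' y' z'"
  then have "((\<lambda>r. z r * exp (- (3/4) * r)) has_real_derivative
      z' * exp (- (3/4) * r) + - (3/4) * exp (- (3/4) * r) * z r) (at r)"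
    by (intro DERIV_mult DERIV_exp_scaled)
  then have "((\<lambda>r. z r * exp (- (3/4) * r)) has_real_derivative
      exp (- (3/4) * r) * (z' - 3/4 * z r)) (at r)"
    by (simp add: algebra_simps)
  moreover have "z' > 3/4 * z r"
    using csu_bounds_z_excess_slope(2)[OF bounds eps] nonneg y_bound z_large \<open>r \<le> 0\<close> by simp
  ultimately show "\<exists>D. ((\<lambda>r. z r * exp (- (3/4) * r)) has_real_derivative D) (at r) \<and> 0 < D"
    by force
qed simp_all

lemma x_excess_decay:
  assumes "s \<le> t" "t \<le> 0" "8 * \<epsilon> * z t < x t"
  shows "(x t - 8 * \<epsilon> * z t) * exp (- 3 * \<epsilon> * t) \<le> (x s - 8 * \<epsilon> * z s) * exp (- 3 * \<epsilon> * s)"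
proof -
  define \<psi> where "\<psi> r = (x r - 8 * \<epsilon> * z r) * exp (- 3 * \<epsilon> * r)" for r
  have "\<psi> t \<le> max (\<psi> s) 0"
  proof (rule stays_below[OF \<open>s \<le> t\<close> \<open>t \<le> 0\<close>])
    show "abs_cont_on {s..t} \<psi>"
      unfolding \<psi>_def using abs_cont_on_xyz[OF \<open>s \<le> t\<close> \<open>t \<le> 0\<close>]
      by (intro abs_cont_on_mult abs_cont_on_exp abs_cont_on_diff abs_cont_on_cmult)
    fix r x' y' z' assume "r \<le> 0" and dx: "(x has_real_derivative x') (at r)"
      and "(y has_real_derivative y') (at r)" and dz: "(z has_real_derivative z') (at r)"
      and bounds: "csu_bounds \<epsilon> (x r) (y r) (z r) x' y' z'" and "max (\<psi> s) 0 < \<psi> r"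
    then have "x r > 8 * \<epsilon> * z r"
      by (simp add: \<psi>_def zero_less_mult_iff)
    then have "x' - 8 * \<epsilon> * z' < 3 * \<epsilon> * (x r - 8 * \<epsilon> * z r)"
      using csu_bounds_x_excess_slope[OF bounds eps] nonneg y_bound \<open>r \<le> 0\<close> by simp
    then have neg: "exp (- 3 * \<epsilon> * r) * ((x' - 8 * \<epsilon> * z') - 3 * \<epsilon> * (x r - 8 * \<epsilon> * z r)) < 0"
      by (simp add: mult_pos_neg)
    have "(\<psi> has_real_derivative
        (x' - 8 * \<epsilon> * z') * exp (- 3 * \<epsilon> * r) + - 3 * \<epsilon> * exp (- 3 * \<epsilon> * r) * (x r - 8 * \<epsilon> * z r)) (at r)"
      unfolding \<psi>_def by (intro DERIV_mult DERIV_diff DERIV_cmult DERIV_exp_scaled dx dz)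
    then have "(\<psi> has_real_derivative
        exp (- 3 * \<epsilon> * r) * ((x' - 8 * \<epsilon> * z') - 3 * \<epsilon> * (x r - 8 * \<epsilon> * z r))) (at r)"
      by (simp add: algebra_simps)
    with neg show "\<exists>D. (\<psi> has_real_derivative D) (at r) \<and> D < 0"
      by blast
  qed simp
  moreover have "0 < \<psi> t"
    using assms(3) by (simp add: \<psi>_def)
  ultimately show ?thesis
    by (simp add: \<psi>_def)
qed

text \<open>Otherwise x - 8 \<epsilon> z decays backwards in time at most like e^{3 \<epsilon> s} while z decays at
  least like e^{3 s / 4}, which contradicts 8 \<epsilon> x < z as s \<rightarrow> -\<infinity>.\<close>
lemma x_bounded_by_z:
  assumes z_large: "\<And>r. r \<le> 0 \<Longrightarrow> 8 * \<epsilon> * x r < z r" and "t \<le> 0"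
  shows "x t \<le> 8 * \<epsilon> * z t"
proof (rule ccontr)
  assume "\<not> x t \<le> 8 * \<epsilon> * z t"
  define \<Psi> where "\<Psi> = (x t - 8 * \<epsilon> * z t) * exp (- 3 * \<epsilon> * t)"
  define G where "G = z t * exp (- (3/4) * t)"
  define \<alpha> where "\<alpha> = 3/4 - 3 * \<epsilon>"
  have "0 < \<Psi>"
    using \<open>\<not> x t \<le> 8 * \<epsilon> * z t\<close> by (simp add: \<Psi>_def)
  have "0 \<le> 8 * \<epsilon> * x t"
    using nonneg(1)[OF \<open>t \<le> 0\<close>] eps(1) by simp
  then have "0 < G"
    using z_large[OF \<open>t \<le> 0\<close>] by (simp add: G_def)
  have "0 < \<alpha>"
    using eps(2) by (simp add: \<alpha>_def)
  define s where "s = min t (ln (8 * \<epsilon> * \<Psi> / G) / \<alpha>)"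
  have "s \<le> t" "s \<le> 0"
    using \<open>t \<le> 0\<close> by (auto simp: s_def)
  have "\<alpha> * s \<le> \<alpha> * (ln (8 * \<epsilon> * \<Psi> / G) / \<alpha>)"
    using \<open>0 < \<alpha>\<close> by (intro mult_left_mono) (auto simp: s_def)
  then have "exp (\<alpha> * s) \<le> exp (ln (8 * \<epsilon> * \<Psi> / G))"
    using \<open>0 < \<alpha>\<close> by simp
  also have "\<dots> = 8 * \<epsilon> * \<Psi> / G"
    using \<open>0 < \<Psi>\<close> \<open>0 < G\<close> eps(1) by simp
  finally have "exp (\<alpha> * s) \<le> 8 * \<epsilon> * \<Psi> / G" .
  have "8 * \<epsilon> * \<Psi> \<le> 8 * \<epsilon> * ((x s - 8 * \<epsilon> * z s) * exp (- 3 * \<epsilon> * s))"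
    using x_excess_decay[OF \<open>s \<le> t\<close> \<open>t \<le> 0\<close>] \<open>\<not> x t \<le> 8 * \<epsilon> * z t\<close> eps(1)
    by (simp add: \<Psi>_def)
  also have "\<dots> \<le> 8 * \<epsilon> * x s * exp (- 3 * \<epsilon> * s)"
    using nonneg(3)[OF \<open>s \<le> 0\<close>] eps(1) by (simp add: algebra_simps)
  also have "\<dots> < z s * exp (- 3 * \<epsilon> * s)"
    using z_large[OF \<open>s \<le> 0\<close>] by simp
  also have "\<dots> = z s * exp (- (3/4) * s) * exp (\<alpha> * s)"
    by (simp add: \<alpha>_def algebra_simps flip: exp_add)
  also have "\<dots> \<le> G * (8 * \<epsilon> * \<Psi> / G)"
    using z_growth[OF \<open>s \<le> t\<close> \<open>t \<le> 0\<close> z_large] \<open>exp (\<alpha> * s) \<le> 8 * \<epsilon> * \<Psi> / G\<close> nonneg(3)[OF \<open>s \<le> 0\<close>] \<open>0 < G\<close>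
    by (intro mult_mono) (auto simp: G_def)
  also have "\<dots> = 8 * \<epsilon> * \<Psi>"
    using \<open>0 < G\<close> by simp
  finally show False
    by simp
qed

lemma dichotomy: "(\<exists>s_star\<le>0. \<forall>s\<le>s_star. z s \<le> 8 * \<epsilon> * x s) \<or> (\<forall>s\<le>0. x s \<le> 8 * \<epsilon> * z s)"
proof (cases "\<exists>s_star\<le>0. \<forall>s\<le>s_star. z s \<le> 8 * \<epsilon> * x s")
  case False
  have "8 * \<epsilon> * x t < z t" if "t \<le> 0" for t
  proof -
    obtain s where "s \<le> t" "8 * \<epsilon> * x s < z s"
      using False \<open>t \<le> 0\<close> by (meson not_le)
    then have "z s - 8 * \<epsilon> * x s \<le> z t - 8 * \<epsilon> * x t"
      using z_excess_mono[OF _ \<open>t \<le> 0\<close>] by blast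
    with \<open>8 * \<epsilon> * x s < z s\<close> show ?thesis
      by linarith
  qed
  then show ?thesis
    using x_bounded_by_z by blast
qed simp

end

lemma AE_lborel_exceptional_set:
  assumes "AE s in lborel. P s"
  obtains N where "negligible N" "\<And>s. s \<notin> N \<Longrightarrow> P s"
proof -
  obtain N where "N \<in> null_sets lborel" "\<And>s. s \<in> space lborel - N \<Longrightarrow> P s"
    using AE_E3[OF assms] by blast
  moreover from \<open>N \<in> null_sets lborel\<close> have "negligible N"
    using null_sets_completionI negligible_iff_null_sets by blast
  ultimately show ?thesis
    using that by simp
qed

lemma csu_dichotomy:
  fixes x y z :: "real \<Rightarrow> real" and \<epsilon> :: real
  assumes "abs_cont_nonpos x" "abs_cont_nonpos y" "abs_cont_nonpos z"
    and "\<forall>s\<le>0. x s \<ge> 0 \<and> y s \<ge> 0 \<and> z s \<ge> 0"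
    and "Liminf at_bot (\<lambda>s. ereal (y s)) = 0" "\<epsilon> > 0"
    and AE: "AE s in lborel. s \<le> 0 \<longrightarrow>
          (\<exists>x' y' z'. (x has_real_derivative x') (at s) \<and>
                      (y has_real_derivative y') (at s) \<and>
                      (z has_real_derivative z') (at s) \<and>
                      \<bar>x'\<bar> \<le> \<epsilon> * (x s + y s + z s) \<and>
                      y' + y s \<le> \<epsilon> * (x s + z s) \<and>
                      z' - z s \<ge> - \<epsilon> * (x s + y s))"
    and "\<epsilon> \<le> 1/100"
  shows "(\<forall>s\<le>0. y s \<le> 2 * \<epsilon> * (x s + z s))
         \<and> ((\<exists>s_star\<le>0. \<forall>s\<le>s_star. z s \<le> 8 * \<epsilon> * x s) \<or> (\<forall>s\<le>0. x s \<le> 8 * \<epsilon> * z s))"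
proof -
  obtain N where "negligible N" and N: "\<And>s. s \<notin> N \<Longrightarrow> s \<le> 0 \<longrightarrow>
      (\<exists>x' y' z'. (x has_real_derivative x') (at s) \<and> (y has_real_derivative y') (at s) \<and>
        (z has_real_derivative z') (at s) \<and> csu_bounds \<epsilon> (x s) (y s) (z s) x' y' z')"
    using AE_lborel_exceptional_set[OF AE] unfolding csu_bounds_def by blast
  interpret csu_system x y z \<epsilon> N
    using assms \<open>negligible N\<close> N by unfold_locales auto
  show ?thesis
    using y_bound dichotomy by blast
qed

text \<open>The constants \<epsilon>0 = 1/100 and c = 8 work.\<close>
theorem lemmaB1:
  shows "\<exists>\<epsilon>0>0. \<exists>c>0. \<forall>(x::real \<Rightarrow> real) (y::real \<Rightarrow> real) (z::real \<Rightarrow> real) (\<epsilon>::real).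
     ( abs_cont_nonpos x \<and> abs_cont_nonpos y \<and> abs_cont_nonpos z
     \<and> (\<forall>s\<le>0. x s \<ge> 0 \<and> y s \<ge> 0 \<and> z s \<ge> 0)
     \<and> (\<forall>s\<le>0. x s + y s + z s > 0)
     \<and> Liminf at_bot (\<lambda>s. ereal (y s)) = 0
     \<and> \<epsilon> > 0
     \<and> (AE s in lborel. s \<le> 0 \<longrightarrow>
          (\<exists>x' y' z'. (x has_real_derivative x') (at s) \<and>
                      (y has_real_derivative y') (at s) \<and>
                      (z has_real_derivative z') (at s) \<and>
                      \<bar>x'\<bar> \<le> \<epsilon> * (x s + y s + z s) \<and>
                      y' + y s \<le> \<epsilon> * (x s + z s) \<and>
                      z' - z s \<ge> - \<epsilon> * (x s + y s)))
     \<and> \<epsilon> \<le> \<epsilon>0 )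
     \<longrightarrow> (\<forall>s\<le>0. y s \<le> 2 * \<epsilon> * (x s + z s))
         \<and> ((\<exists>s_star\<le>0. \<forall>s\<le>s_star. z s \<le> 8 * \<epsilon> * x s)
            \<or> (\<forall>s\<le>0. x s \<le> c * \<epsilon> * z s))"
  apply (rule exI[of _ "1/100"], rule conjI, simp)
  apply (rule exI[of _ 8], rule conjI, simp)
  apply (intro allI impI, elim conjE)
  by (rule csu_dichotomy)

end
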